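(* Let $f:\mathcal D\subset\Omega\times(0,\infty)\to\Omega\times(0,\infty)$ be a measure-preserving embedding, and suppose there is $W\in\mathcal C^1_\psi(\Omega\times(0,\infty))$ and constants $\beta,\delta>0$ with $0<\beta\le\partial_rW(\omega,r)\le\delta$ for all $(\omega,r)\in\Omega\times(0,\infty)$ and $W(f(\omega,r))\le W(\omega,r)+k(r)$ for all $(\omega,r)\in\mathcal D$, where $k:(0,\infty)\to\mathbb R$ is decreasing, bounded, with $\lim_{r\to\infty}k(r)=0$. Let $(\epsilon_j)_{j\in\mathbb N}$, $(W_j)_{j\in\mathbb N}$ be sequences of positive numbers with $\sum_j\epsilon_j<\infty$, $\lim_{j\to\infty}W_j=\infty$ and $\lim_{j\to\infty}\epsilon_j^{-1}k\big(\tfrac{1}{4\delta}W_j\big)=0$. Put $$\mathcal A=\bigcup_{j\in\mathbb N}\mathcal A_j,\qquad \mathcal A_j=\{(\omega,r)\in\Omega\times(0,\infty):|W(\omega,r)-W_j|\le\epsilon_j\}.$$ Then $(\mu_\Omega\otimes\lambda)(\mathcal A)<\infty$, and for every $(\omega_0,r_0)\in\mathcal U$ there is $K\in\mathbb N$ with $(\omega_K,r_K)=f^K(\omega_0,r_0)\in\mathcal A$.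
   Context: $\Omega$ is a commutative (written additively), compact, metrizable topological group, and $\psi:\mathbb R\to\Omega$ is a continuous group homomorphism with $\psi(\mathbb R)$ dense. $\mu_\Omega$ is the Haar probability measure of $\Omega$ and $\lambda$ Lebesgue measure on $\mathbb R$. For $U:\Omega\to\mathbb R$, $\partial_\psi U(\omega)=\lim_{t\to0}\frac{U(\omega+\psi(t))-U(\omega)}{t}$; $\mathcal C^1_\psi(\Omega)$ is the space of continuous $U$ with $\partial_\psi U$ existing everywhere and continuous; $\mathcal C^1_\psi(\Omega\times(0,\infty))$ is the set of $W(\omega,r)$ with $W(\cdot,r)\in\mathcal C^1_\psi(\Omega)$ for all $r$ and $W(\omega,\cdot)\in\mathcal C^1(0,\infty)$ for all $\omega$. A measure-preserving embedding is a continuous injective map $f:\mathcal D\to\Omega\times(0,\infty)$, $\mathcal D\subset\Omega\times(0,\infty)$ open, with $(\mu_\Omega\otimes\lambda)(f(\mathcal B))=(\mu_\Omega\otimes\lambda)(\mathcal B)$ for Borel $\mathcal B\subset\mathcal D$. Set $\mathcal D_1=\mathcal D$, $\mathcal D_{n+1}=f^{-1}(\mathcal D_n)$, $\mathcal D_\infty=\bigcap_n\mathcal D_n$; for $(\omega_0,r_0)\in\mathcal D_\infty$ write $(\omega_n,r_n)=f^n(\omega_0,r_0)$, and $\mathcal U=\{(\omega_0,r_0)\in\mathcal D_\infty:\limsup_{n\to\infty}r_n=\infty\}$. *)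

theory Defs
  imports "HOL-Probability.Probability"
begin

definition haar_prob :: "'a::{metric_space, topological_ab_group_add} measure \<Rightarrow> bool" where
  "haar_prob \<mu> \<longleftrightarrow> prob_space \<mu> \<and> sets \<mu> = sets borel \<and>
     (\<forall>x A. A \<in> sets borel \<longrightarrow> measure \<mu> ((\<lambda>y. x + y) ` A) = measure \<mu> A)"

definition dense_flow :: "(real \<Rightarrow> 'a::{metric_space, topological_ab_group_add}) \<Rightarrow> bool" where
  "dense_flow \<psi> \<longleftrightarrow> continuous_on UNIV \<psi> \<and> (\<forall>s t. \<psi> (s + t) = \<psi> s + \<psi> t)
     \<and> closure (range \<psi>) = UNIV"

definition has_psi_deriv ::
    "(real \<Rightarrow> 'a::{metric_space, topological_ab_group_add}) \<Rightarrow> ('a \<Rightarrow> real) \<Rightarrow> 'a \<Rightarrow> real \<Rightarrow> bool" where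
  "has_psi_deriv \<psi> U \<omega> D \<longleftrightarrow> ((\<lambda>t. (U (\<omega> + \<psi> t) - U \<omega>) / t) \<longlongrightarrow> D) (at 0)"

definition C1_psi :: "(real \<Rightarrow> 'a::{metric_space, topological_ab_group_add}) \<Rightarrow> ('a \<Rightarrow> real) \<Rightarrow> bool" where
  "C1_psi \<psi> U \<longleftrightarrow> continuous_on UNIV U \<and>
     (\<exists>DU. (\<forall>\<omega>. has_psi_deriv \<psi> U \<omega> (DU \<omega>)) \<and> continuous_on UNIV DU)"

text \<open>The space C^1_psi(Omega x (0,oo)); values of W for r <= 0 are irrelevant.\<close>
definition C1_psi_prod ::
    "(real \<Rightarrow> 'a::{metric_space, topological_ab_group_add}) \<Rightarrow> ('a \<times> real \<Rightarrow> real) \<Rightarrow> bool" where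
  "C1_psi_prod \<psi> W \<longleftrightarrow> (\<forall>r>0. C1_psi \<psi> (\<lambda>\<omega>. W (\<omega>, r))) \<and>
     (\<forall>\<omega>. \<exists>Wr. (\<forall>r>0. ((\<lambda>s. W (\<omega>, s)) has_real_derivative Wr r) (at r))
              \<and> continuous_on {0<..} Wr)"

definition mp_embedding ::
    "'a::{metric_space, topological_ab_group_add} measure \<Rightarrow> ('a \<times> real) set \<Rightarrow> ('a \<times> real \<Rightarrow> 'a \<times> real) \<Rightarrow> bool" where
  "mp_embedding \<mu> D f \<longleftrightarrow> open D \<and> D \<subseteq> UNIV \<times> {0<..} \<and> f ` D \<subseteq> UNIV \<times> {0<..} \<and>
     continuous_on D f \<and> inj_on f D \<and>
     (\<forall>B. B \<in> sets (\<mu> \<Otimes>\<^sub>M lborel) \<longrightarrow> B \<subseteq> D \<longrightarrow>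
        f ` B \<in> sets (\<mu> \<Otimes>\<^sub>M lborel) \<and>
        emeasure (\<mu> \<Otimes>\<^sub>M lborel) (f ` B) = emeasure (\<mu> \<Otimes>\<^sub>M lborel) B)"

text \<open>D_{n+1} = f^{-1}(D_n), indexed from 0 (Dn 0 = D_1 = D).\<close>
fun Dn :: "('b \<Rightarrow> 'b) \<Rightarrow> 'b set \<Rightarrow> nat \<Rightarrow> 'b set" where
  "Dn f D 0 = D"
| "Dn f D (Suc n) = D \<inter> f -` Dn f D n"

definition Dinf :: "('b \<Rightarrow> 'b) \<Rightarrow> 'b set \<Rightarrow> 'b set" where
  "Dinf f D = (\<Inter>n. Dn f D n)"

definition Uset :: "('a \<times> real \<Rightarrow> 'a \<times> real) \<Rightarrow> ('a \<times> real) set \<Rightarrow> ('a \<times> real) set" where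
  "Uset f D = {x \<in> Dinf f D. limsup (\<lambda>n. ereal (snd ((f ^^ n) x))) = \<infinity>}"

end

theory Submission
  imports Defs
begin

text \<open>Since \<open>\<beta> \<le> \<partial>\<^sub>rW \<le> \<delta>\<close>, every \<open>r\<close>-section of the band
  \<open>A\<^sub>j = {|W - W\<^sub>j| \<le> \<epsilon>\<^sub>j}\<close> is an interval of length at most \<open>4\<epsilon>\<^sub>j/\<beta>\<close>, so by Tonelli
  and \<open>\<Sum>\<epsilon>\<^sub>j < \<infinity>\<close> the union \<open>A\<close> has finite measure.
  Along an orbit with \<open>limsup r\<^sub>n = \<infinity>\<close> the values \<open>W(\<omega>\<^sub>n, r\<^sub>n)\<close> are unbounded. For large
  \<open>j\<close> look at the last index \<open>p\<close> before they first exceed \<open>W\<^sub>j + \<epsilon>\<^sub>j\<close>: the step inequality gives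
  \<open>W\<^sub>j + \<epsilon>\<^sub>j - k(r\<^sub>p) < W(\<omega>\<^sub>p, r\<^sub>p) \<le> W\<^sub>j + \<epsilon>\<^sub>j\<close>. As \<open>k\<close> is bounded and
  \<open>W \<le> C + \<delta> r\<close>, this forces \<open>r\<^sub>p \<ge> W\<^sub>j/(4\<delta>)\<close>, hence
  \<open>k(r\<^sub>p) \<le> k(W\<^sub>j/(4\<delta>)) < 2\<epsilon>\<^sub>j\<close> and \<open>(\<omega>\<^sub>p, r\<^sub>p) \<in> A\<^sub>j\<close>.\<close>

lemma first_upcrossing:
  fixes V :: "nat \<Rightarrow> 'a::linorder"
  assumes "V 0 \<le> T" and "T < V n"
  obtains p where "V p \<le> T" and "T < V (Suc p)"
  using assms(2)
proof (induction n)
  case 0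
  then show ?case using assms(1) by simp
next
  case (Suc n)
  then show ?case by (cases "T < V n") (auto simp: not_less)
qed

lemma ereal_limsup_infinity_imp_unbounded:
  assumes "limsup (\<lambda>n. ereal (R n)) = \<infinity>"
  shows "\<exists>n. b < R n"
proof (rule ccontr)
  assume "\<nexists>n. b < R n"
  then have "limsup (\<lambda>n. ereal (R n)) \<le> ereal b"
    by (intro Limsup_bounded) (auto simp: not_less intro: always_eventually)
  with assms show False by simp
qed

lemma upcrossing_hits_band:
  fixes V R k :: "_ \<Rightarrow> real" and \<epsilon> Wj :: "nat \<Rightarrow> real"
  assumes step: "\<And>n. V (Suc n) \<le> V n + k (R n)"
    and R_pos: "\<And>n. R n > 0"
    and V_le: "\<And>n. V n \<le> C + \<delta> * R n"
    and V_unbounded: "\<And>b. \<exists>n. b < V n"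
    and k_le: "\<And>t. t > 0 \<Longrightarrow> k t \<le> M"
    and k_decr: "\<And>s t. 0 < s \<Longrightarrow> s \<le> t \<Longrightarrow> k t \<le> k s"
    and delta_pos: "\<delta> > 0"
    and eps_pos: "\<And>j. \<epsilon> j > 0"
    and Wj_pos: "\<And>j. Wj j > 0"
    and Wj_lim: "filterlim Wj at_top sequentially"
    and ratio_lim: "(\<lambda>j. k (Wj j / (4 * \<delta>)) / \<epsilon> j) \<longlonglongrightarrow> 0"
  shows "\<exists>j n. \<bar>V n - Wj j\<bar> \<le> \<epsilon> j"
proof -
  have "\<forall>\<^sub>F j in sequentially. k (Wj j / (4 * \<delta>)) / \<epsilon> j < 2"
    using ratio_lim by (rule order_tendstoD) simp
  moreover have "\<forall>\<^sub>F j in sequentially. max (2 * (M + C)) (V 0 + 1) \<le> Wj j"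
    using Wj_lim unfolding filterlim_at_top by blast
  ultimately obtain j where ratio: "k (Wj j / (4 * \<delta>)) / \<epsilon> j < 2"
    and Wj_large: "max (2 * (M + C)) (V 0 + 1) \<le> Wj j"
    using eventually_happens'[OF sequentially_bot eventually_conj] by blast
  have k_small: "k (Wj j / (4 * \<delta>)) < 2 * \<epsilon> j"
    using ratio eps_pos[of j] by (simp add: divide_less_eq)
  define T where "T = Wj j + \<epsilon> j"
  have "V 0 \<le> T" using Wj_large eps_pos[of j] by (simp add: T_def)
  moreover obtain n where "T < V n" using V_unbounded by blast
  ultimately obtain p where below: "V p \<le> T" and above: "T < V (Suc p)"
    by (rule first_upcrossing)
  have jump: "T - k (R p) < V p" using above step[of p] by simp
  have "Wj j / 4 \<le> \<delta> * R p"
    using jump k_le[OF R_pos[of p]] V_le[of p] Wj_large eps_pos[of j] Wj_pos[of j]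
    by (simp add: T_def)
  then have "Wj j / (4 * \<delta>) \<le> R p"
    using delta_pos by (simp add: field_simps)
  then have "k (R p) \<le> k (Wj j / (4 * \<delta>))"
    using Wj_pos[of j] delta_pos by (intro k_decr) simp_all
  then have "\<bar>V p - Wj j\<bar> \<le> \<epsilon> j"
    using below jump k_small by (simp add: T_def abs_le_iff)
  then show ?thesis by blast
qed

lemma funpow_in_Dn: "x \<in> Dn f D n \<Longrightarrow> (f ^^ n) x \<in> D"
proof (induction n arbitrary: x)
  case (Suc n)
  then show ?case by (simp add: funpow_Suc_right del: funpow.simps)
qed simp

lemma funpow_in_D_if_Dinf: "x \<in> Dinf f D \<Longrightarrow> (f ^^ n) x \<in> D"
  by (rule funpow_in_Dn) (simp add: Dinf_def)

lemma UsetD_Dinf: "x \<in> Uset f D \<Longrightarrow> x \<in> Dinf f D"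
  by (simp add: Uset_def)

lemma UsetD_limsup: "x \<in> Uset f D \<Longrightarrow> limsup (\<lambda>n. ereal (snd ((f ^^ n) x))) = \<infinity>"
  by (simp add: Uset_def)

lemma emeasure_UN_lt_top_if_summable:
  assumes "range A \<subseteq> sets M" and "\<And>j. emeasure M (A j) \<le> ennreal (c j)"
    and "summable c" and "\<And>j. c j \<ge> 0"
  shows "emeasure M (\<Union>j. A j) < \<infinity>"
proof -
  have "emeasure M (\<Union>j. A j) \<le> (\<Sum>j. emeasure M (A j))"
    using assms(1) by (rule emeasure_subadditive_countably)
  also have "\<dots> \<le> (\<Sum>j. ennreal (c j))"
    using assms(2) by (intro suminf_le summableI)
  also have "\<dots> = ennreal (\<Sum>j. c j)"
    using assms(4,3) by (rule suminf_ennreal2)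
  also have "\<dots> < \<infinity>" by simp
  finally show ?thesis .
qed

lemma increment_bounds_from_deriv_bounds:
  fixes g :: "real \<Rightarrow> real"
  assumes diff: "\<And>r. r > 0 \<Longrightarrow> g differentiable at r"
    and bounds: "\<And>r. r > 0 \<Longrightarrow> \<beta> \<le> deriv g r \<and> deriv g r \<le> \<delta>"
    and "0 < s" "s \<le> t"
  shows "\<beta> * (t - s) \<le> g t - g s \<and> g t - g s \<le> \<delta> * (t - s)"
proof (cases "s = t")
  case False
  then have "s < t" using \<open>s \<le> t\<close> by simp
  moreover have "\<And>r. s \<le> r \<Longrightarrow> r \<le> t \<Longrightarrow> (g has_real_derivative deriv g r) (at r)"
    using diff \<open>0 < s\<close> by (simp add: DERIV_deriv_iff_real_differentiable)
  ultimately obtain z where z: "s < z" "z < t" "g t - g s = (t - s) * deriv g z"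
    using MVT2 by blast
  then show ?thesis
    using bounds[of z] \<open>0 < s\<close> \<open>s < t\<close> by (simp add: mult.commute mult_left_mono)
qed simp

locale radial_bilipschitz =
  fixes W :: "'a::topological_space \<times> real \<Rightarrow> real" and \<beta> \<delta> :: real
  assumes continuous_W: "\<And>r. r > 0 \<Longrightarrow> continuous_on UNIV (\<lambda>\<omega>. W (\<omega>, r))"
    and differentiable_W: "\<And>\<omega> r. r > 0 \<Longrightarrow> (\<lambda>s. W (\<omega>, s)) differentiable at r"
    and deriv_W_bounds: "\<And>\<omega> r. r > 0 \<Longrightarrow>
       \<beta> \<le> deriv (\<lambda>s. W (\<omega>, s)) r \<and> deriv (\<lambda>s. W (\<omega>, s)) r \<le> \<delta>"
    and beta_pos: "\<beta> > 0"
begin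

lemma W_increment_bounds:
  assumes "0 < s" "s \<le> t"
  shows "\<beta> * (t - s) \<le> W (\<omega>, t) - W (\<omega>, s) \<and> W (\<omega>, t) - W (\<omega>, s) \<le> \<delta> * (t - s)"
  using increment_bounds_from_deriv_bounds[OF differentiable_W deriv_W_bounds assms] .

lemma W_strict_mono:
  assumes "0 < s" "s < t"
  shows "W (\<omega>, s) < W (\<omega>, t)"
proof -
  have "0 < \<beta> * (t - s)" using assms beta_pos by simp
  then show ?thesis using W_increment_bounds[of s t \<omega>] assms by linarith
qed

lemma dist_le_W_dist:
  assumes "0 < r" "0 < s"
  shows "\<beta> * \<bar>r - s\<bar> \<le> \<bar>W (\<omega>, r) - W (\<omega>, s)\<bar>"
  using W_increment_bounds[of r s \<omega>] W_increment_bounds[of s r \<omega>] assms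
  by (cases "r \<le> s") (auto simp: abs_if algebra_simps)

lemma delta_pos: "\<delta> > 0"
  using deriv_W_bounds[of 1] beta_pos by force

text \<open>Monotonicity in \<open>r\<close> and continuity in \<open>\<omega>\<close> write strict level sets as countable unions of
  measurable rectangles.\<close>

lemma superlevel_set_eq:
  "{(\<omega>, r). r > 0 \<and> c < W (\<omega>, r)} = (\<Union>q\<in>\<rat> \<inter> {0<..}. {\<omega>. c < W (\<omega>, q)} \<times> {q<..})"
proof (intro set_eqI iffI)
  fix x assume "x \<in> {(\<omega>, r). r > 0 \<and> c < W (\<omega>, r)}"
  then obtain \<omega> r where x: "x = (\<omega>, r)" "r > 0" "c < W (\<omega>, r)" by auto
  define e where "e = (W (\<omega>, r) - c) / \<delta>"
  have "e > 0" using x delta_pos by (simp add: e_def)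
  then obtain q where q: "q \<in> \<rat>" "max 0 (r - e) < q" "q < r"
    using Rats_dense_in_real[of "max 0 (r - e)" r] x by auto
  have "W (\<omega>, r) - W (\<omega>, q) \<le> \<delta> * (r - q)" using W_increment_bounds[of q r \<omega>] q by auto
  also have "\<dots> < \<delta> * e" using q delta_pos by (intro mult_strict_left_mono) auto
  finally have "c < W (\<omega>, q)" using delta_pos by (simp add: e_def)
  then show "x \<in> (\<Union>q\<in>\<rat> \<inter> {0<..}. {\<omega>. c < W (\<omega>, q)} \<times> {q<..})" using q x by auto
next
  fix x assume "x \<in> (\<Union>q\<in>\<rat> \<inter> {0<..}. {\<omega>. c < W (\<omega>, q)} \<times> {q<..})"
  then obtain \<omega> r q where "x = (\<omega>, r)" "q > 0" "c < W (\<omega>, q)" "q < r" by auto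
  then show "x \<in> {(\<omega>, r). r > 0 \<and> c < W (\<omega>, r)}"
    using W_strict_mono[of q r \<omega>] by auto
qed

lemma sublevel_set_eq:
  "{(\<omega>, r). r > 0 \<and> W (\<omega>, r) < c} = (\<Union>q\<in>\<rat> \<inter> {0<..}. {\<omega>. W (\<omega>, q) < c} \<times> {0<..<q})"
proof (intro set_eqI iffI)
  fix x assume "x \<in> {(\<omega>, r). r > 0 \<and> W (\<omega>, r) < c}"
  then obtain \<omega> r where x: "x = (\<omega>, r)" "r > 0" "W (\<omega>, r) < c" by auto
  define e where "e = (c - W (\<omega>, r)) / \<delta>"
  have "e > 0" using x delta_pos by (simp add: e_def)
  then obtain q where q: "q \<in> \<rat>" "r < q" "q < r + e"
    using Rats_dense_in_real[of r "r + e"] by auto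
  have "W (\<omega>, q) - W (\<omega>, r) \<le> \<delta> * (q - r)" using W_increment_bounds[of r q \<omega>] q x by auto
  also have "\<dots> < \<delta> * e" using q delta_pos by (intro mult_strict_left_mono) auto
  finally have "W (\<omega>, q) < c" using delta_pos by (simp add: e_def)
  then show "x \<in> (\<Union>q\<in>\<rat> \<inter> {0<..}. {\<omega>. W (\<omega>, q) < c} \<times> {0<..<q})" using q x by auto
next
  fix x assume "x \<in> (\<Union>q\<in>\<rat> \<inter> {0<..}. {\<omega>. W (\<omega>, q) < c} \<times> {0<..<q})"
  then obtain \<omega> r q where "x = (\<omega>, r)" "r > 0" "W (\<omega>, q) < c" "r < q" by auto
  then show "x \<in> {(\<omega>, r). r > 0 \<and> W (\<omega>, r) < c}"
    using W_strict_mono[of r q \<omega>] by auto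
qed

definition band :: "real \<Rightarrow> real \<Rightarrow> ('a \<times> real) set" where
  "band a e = {(\<omega>, r). r > 0 \<and> \<bar>W (\<omega>, r) - a\<bar> \<le> e}"

lemma band_measurable:
  assumes "sets M = sets borel"
  shows "band a e \<in> sets (M \<Otimes>\<^sub>M lborel)"
proof -
  have countable_pos_rats: "countable (\<rat> \<inter> {0<..} :: real set)"
    using countable_rat by (rule countable_subset[rotated]) auto
  have open_measurable: "S \<times> I \<in> sets (M \<Otimes>\<^sub>M lborel)" if "open S" "open I" for S I
    using that assms by (intro pair_measureI) auto
  have "{\<omega>. c < W (\<omega>, q)} \<times> {q<..} \<in> sets (M \<Otimes>\<^sub>M lborel)"
    "{\<omega>. W (\<omega>, q) < c} \<times> {0<..<q} \<in> sets (M \<Otimes>\<^sub>M lborel)" if "q > 0" for q c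
    using continuous_W[OF that]
    by (intro open_measurable open_Collect_less continuous_on_const open_greaterThan
        open_greaterThanLessThan; assumption)+
  then have level_sets: "{(\<omega>, r). r > 0 \<and> c < W (\<omega>, r)} \<in> sets (M \<Otimes>\<^sub>M lborel)"
    "{(\<omega>, r). r > 0 \<and> W (\<omega>, r) < c} \<in> sets (M \<Otimes>\<^sub>M lborel)" for c
    unfolding superlevel_set_eq sublevel_set_eq
    by (auto intro!: sets.countable_UN''[OF countable_pos_rats])
  have "band a e =
     UNIV \<times> {0<..} - {(\<omega>, r). r > 0 \<and> a + e < W (\<omega>, r)} - {(\<omega>, r). r > 0 \<and> W (\<omega>, r) < a - e}"
    by (auto simp: band_def)
  also have "\<dots> \<in> sets (M \<Otimes>\<^sub>M lborel)"
    by (intro sets.Diff level_sets open_measurable open_UNIV open_greaterThan)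
  finally show ?thesis .
qed

lemma band_emeasure_le:
  assumes "sets M = sets borel" "prob_space M" "e \<ge> 0"
  shows "emeasure (M \<Otimes>\<^sub>M lborel) (band a e) \<le> ennreal (4 * e / \<beta>)"
proof -
  let ?S = "band a e"
  have section_le: "emeasure lborel (Pair \<omega> -` ?S) \<le> ennreal (4 * e / \<beta>)" for \<omega>
  proof (cases "Pair \<omega> -` ?S = {}")
    case False
    then obtain r0 where r0: "r0 > 0" "\<bar>W (\<omega>, r0) - a\<bar> \<le> e" by (auto simp: band_def)
    have "r \<in> {r0 - 2 * e / \<beta> .. r0 + 2 * e / \<beta>}" if "r \<in> Pair \<omega> -` ?S" for r
    proof -
      have "\<beta> * \<bar>r - r0\<bar> \<le> 2 * e"
        using that r0 dist_le_W_dist[of r r0 \<omega>] by (auto simp: band_def)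
      then have "\<bar>r - r0\<bar> \<le> 2 * e / \<beta>" using beta_pos by (simp add: field_simps)
      then show ?thesis by (simp add: abs_le_iff)
    qed
    then have "Pair \<omega> -` ?S \<subseteq> {r0 - 2 * e / \<beta> .. r0 + 2 * e / \<beta>}" by blast
    then have "emeasure lborel (Pair \<omega> -` ?S) \<le> emeasure lborel {r0 - 2 * e / \<beta> .. r0 + 2 * e / \<beta>}"
      by (rule emeasure_mono) simp
    also have "\<dots> = ennreal (4 * e / \<beta>)" using assms(3) beta_pos by simp
    finally show ?thesis .
  qed (metis emeasure_empty zero_le)
  have "emeasure (M \<Otimes>\<^sub>M lborel) ?S = (\<integral>\<^sup>+\<omega>. emeasure lborel (Pair \<omega> -` ?S) \<partial>M)"
    by (rule lborel.emeasure_pair_measure_alt[OF band_measurable[OF assms(1)]])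
  also have "\<dots> \<le> (\<integral>\<^sup>+\<omega>. ennreal (4 * e / \<beta>) \<partial>M)"
    by (intro nn_integral_mono section_le)
  also have "\<dots> = ennreal (4 * e / \<beta>)"
    using prob_space.emeasure_space_1[OF assms(2)] by simp
  finally show ?thesis .
qed

lemma bands_UN_emeasure_lt_top:
  assumes "sets M = sets borel" "prob_space M"
    and "\<And>j. \<epsilon> j > 0" "summable \<epsilon>"
  shows "emeasure (M \<Otimes>\<^sub>M lborel) (\<Union>j. band (a j) (\<epsilon> j)) < \<infinity>"
proof (rule emeasure_UN_lt_top_if_summable)
  show "range (\<lambda>j. band (a j) (\<epsilon> j)) \<subseteq> sets (M \<Otimes>\<^sub>M lborel)"
    using band_measurable[OF assms(1)] by blast
  show "emeasure (M \<Otimes>\<^sub>M lborel) (band (a j) (\<epsilon> j)) \<le> ennreal (4 * \<epsilon> j / \<beta>)" for j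
    using band_emeasure_le[OF assms(1,2) less_imp_le[OF assms(3)]] .
  show "summable (\<lambda>j. 4 * \<epsilon> j / \<beta>)"
    using assms(4) by (intro summable_divide summable_mult)
  show "0 \<le> 4 * \<epsilon> j / \<beta>" for j
    using assms(3)[of j] beta_pos by simp
qed

lemma W_affine_bounds:
  assumes "compact (UNIV :: 'a set)"
  obtains C where "\<And>\<omega> r. r > 0 \<Longrightarrow> W (\<omega>, r) \<le> C + \<delta> * r"
    and "\<And>\<omega> r. r \<ge> 1 \<Longrightarrow> \<beta> * (r - 1) - C \<le> W (\<omega>, r)"
proof -
  have "bounded (range (\<lambda>\<omega>. W (\<omega>, 1)))"
    using continuous_W[of 1] assms by (intro compact_imp_bounded compact_continuous_image) auto
  then obtain C where C: "\<And>\<omega>. \<bar>W (\<omega>, 1)\<bar> \<le> C"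
    unfolding bounded_real by auto
  have "W (\<omega>, r) \<le> C + \<delta> * r" if "r > 0" for \<omega> r
  proof (cases "r \<le> 1")
    case True
    then have "W (\<omega>, r) \<le> W (\<omega>, 1)"
      using W_strict_mono[of r 1 \<omega>] that by (cases "r = 1") auto
    moreover have "0 \<le> \<delta> * r" using delta_pos that by simp
    ultimately show ?thesis using C[of \<omega>] by linarith
  next
    case False
    then have "W (\<omega>, r) - W (\<omega>, 1) \<le> \<delta> * (r - 1)" using W_increment_bounds[of 1 r \<omega>] by simp
    moreover have "\<delta> * (r - 1) \<le> \<delta> * r" using delta_pos by simp
    ultimately show ?thesis using C[of \<omega>] by linarith
  qed
  moreover have "\<beta> * (r - 1) - C \<le> W (\<omega>, r)" if "r \<ge> 1" for \<omega> r
    using W_increment_bounds[of 1 r \<omega>] C[of \<omega>] that by fastforce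
  ultimately show thesis by (rule that)
qed

lemma orbit_hits_band:
  fixes x :: "nat \<Rightarrow> 'a \<times> real" and k :: "real \<Rightarrow> real" and \<epsilon> Wj :: "nat \<Rightarrow> real"
  assumes compact: "compact (UNIV :: 'a set)"
    and r_pos: "\<And>n. snd (x n) > 0"
    and step: "\<And>n. W (x (Suc n)) \<le> W (x n) + k (snd (x n))"
    and r_limsup: "limsup (\<lambda>n. ereal (snd (x n))) = \<infinity>"
    and k_decr: "\<And>s t. 0 < s \<Longrightarrow> s \<le> t \<Longrightarrow> k t \<le> k s"
    and k_bdd: "bounded (k ` {0<..})"
    and eps_pos: "\<And>j. \<epsilon> j > 0"
    and Wj_pos: "\<And>j. Wj j > 0"
    and Wj_lim: "filterlim Wj at_top sequentially"
    and ratio_lim: "(\<lambda>j. k (Wj j / (4 * \<delta>)) / \<epsilon> j) \<longlonglongrightarrow> 0"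
  shows "\<exists>j n. x n \<in> band (Wj j) (\<epsilon> j)"
proof -
  obtain C where W_le: "\<And>\<omega> r. r > 0 \<Longrightarrow> W (\<omega>, r) \<le> C + \<delta> * r"
    and W_ge: "\<And>\<omega> r. r \<ge> 1 \<Longrightarrow> \<beta> * (r - 1) - C \<le> W (\<omega>, r)"
    using W_affine_bounds[OF compact] by blast
  obtain M where "\<forall>y \<in> k ` {0<..}. \<bar>y\<bar> \<le> M"
    using k_bdd unfolding bounded_real by blast
  then have M: "k t \<le> M" if "t > 0" for t
    using that by (auto dest: abs_le_D1)
  have W_unbounded: "\<exists>n. b < W (x n)" for b
  proof -
    obtain n where "max 1 ((b + C) / \<beta> + 1) < snd (x n)"
      using ereal_limsup_infinity_imp_unbounded[OF r_limsup] by blast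
    then have n: "1 \<le> snd (x n)" "(b + C) / \<beta> < snd (x n) - 1"
      by simp_all
    then have "b + C < \<beta> * (snd (x n) - 1)"
      using beta_pos by (simp add: pos_divide_less_eq mult.commute)
    moreover have "\<beta> * (snd (x n) - 1) - C \<le> W (x n)"
      using W_ge[OF n(1), of "fst (x n)"] by simp
    ultimately show ?thesis by (intro exI[of _ n]) linarith
  qed
  have W_le_orbit: "W (x n) \<le> C + \<delta> * snd (x n)" for n
    using W_le[OF r_pos[of n], of "fst (x n)"] by simp
  obtain j n where "\<bar>W (x n) - Wj j\<bar> \<le> \<epsilon> j"
    using upcrossing_hits_band[where V = "\<lambda>n. W (x n)" and R = "\<lambda>n. snd (x n)",
        OF step r_pos W_le_orbit W_unbounded M k_decr delta_pos eps_pos Wj_pos Wj_lim ratio_lim]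
    by blast
  then have "x n \<in> band (Wj j) (\<epsilon> j)"
    using r_pos[of n] by (simp add: band_def case_prod_beta)
  then show ?thesis by blast
qed

lemma Uset_hits_band:
  fixes f :: "'a \<times> real \<Rightarrow> 'a \<times> real" and k :: "real \<Rightarrow> real" and \<epsilon> Wj :: "nat \<Rightarrow> real"
  assumes compact: "compact (UNIV :: 'a set)"
    and D_pos: "D \<subseteq> UNIV \<times> {0<..}"
    and W_step: "\<And>\<omega> r. (\<omega>, r) \<in> D \<Longrightarrow> W (f (\<omega>, r)) \<le> W (\<omega>, r) + k r"
    and x: "x \<in> Uset f D"
    and k_decr: "\<And>s t. 0 < s \<Longrightarrow> s \<le> t \<Longrightarrow> k t \<le> k s"
    and k_bdd: "bounded (k ` {0<..})"
    and eps_pos: "\<And>j. \<epsilon> j > 0"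
    and Wj_pos: "\<And>j. Wj j > 0"
    and Wj_lim: "filterlim Wj at_top sequentially"
    and ratio_lim: "(\<lambda>j. k (Wj j / (4 * \<delta>)) / \<epsilon> j) \<longlonglongrightarrow> 0"
  shows "\<exists>j K. (f ^^ K) x \<in> band (Wj j) (\<epsilon> j)"
proof -
  have in_D: "(f ^^ n) x \<in> D" for n
    using UsetD_Dinf[OF x] by (rule funpow_in_D_if_Dinf)
  have r_pos: "snd ((f ^^ n) x) > 0" for n
    using in_D[of n] D_pos by (auto simp: mem_Times_iff)
  have step: "W ((f ^^ Suc n) x) \<le> W ((f ^^ n) x) + k (snd ((f ^^ n) x))" for n
    using W_step[of "fst ((f ^^ n) x)" "snd ((f ^^ n) x)"] in_D[of n] by simp
  show ?thesis
    using orbit_hits_band[where x = "\<lambda>n. (f ^^ n) x" and k = k, OF compact r_pos step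
        UsetD_limsup[OF x] k_decr k_bdd eps_pos Wj_pos Wj_lim ratio_lim] .
qed

end

lemma C1_psi_prod_radial_bilipschitz:
  assumes "C1_psi_prod \<psi> W" and "\<beta> > 0"
    and "\<And>\<omega> r. r > 0 \<Longrightarrow> \<beta> \<le> deriv (\<lambda>s. W (\<omega>, s)) r \<and> deriv (\<lambda>s. W (\<omega>, s)) r \<le> \<delta>"
  shows "radial_bilipschitz W \<beta> \<delta>"
proof
  show "continuous_on UNIV (\<lambda>\<omega>. W (\<omega>, r))" if "r > 0" for r
    using assms(1) that unfolding C1_psi_prod_def C1_psi_def by blast
  show "(\<lambda>s. W (\<omega>, s)) differentiable at r" if "r > 0" for \<omega> r
    using assms(1) that unfolding C1_psi_prod_def real_differentiable_def by blast
qed (use assms in auto)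

theorem lemma4p3:
  fixes \<mu> :: "'a::{metric_space, topological_ab_group_add} measure"
    and \<psi> :: "real \<Rightarrow> 'a"
    and D :: "('a \<times> real) set"
    and f :: "'a \<times> real \<Rightarrow> 'a \<times> real"
    and W :: "'a \<times> real \<Rightarrow> real"
    and k :: "real \<Rightarrow> real"
    and \<beta> \<delta> :: real
    and \<epsilon> Wj :: "nat \<Rightarrow> real"
  assumes compact_Omega: "compact (UNIV :: 'a set)"
    and haar: "haar_prob \<mu>"
    and psi: "dense_flow \<psi>"
    and emb: "mp_embedding \<mu> D f"
    and W_C1: "C1_psi_prod \<psi> W"
    and beta_pos: "\<beta> > 0" and delta_pos: "\<delta> > 0"
    and W_r_bounds: "\<And>\<omega> r. r > 0 \<Longrightarrow>
         \<beta> \<le> deriv (\<lambda>s. W (\<omega>, s)) r \<and> deriv (\<lambda>s. W (\<omega>, s)) r \<le> \<delta>"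
    and W_step: "\<And>\<omega> r. (\<omega>, r) \<in> D \<Longrightarrow> W (f (\<omega>, r)) \<le> W (\<omega>, r) + k r"
    and k_decr: "\<And>s t. 0 < s \<Longrightarrow> s \<le> t \<Longrightarrow> k t \<le> k s"
    and k_bdd: "bounded (k ` {0<..})"
    and k_lim: "(k \<longlongrightarrow> 0) at_top"
    and eps_pos: "\<And>j. \<epsilon> j > 0"
    and Wj_pos: "\<And>j. Wj j > 0"
    and eps_summable: "summable \<epsilon>"
    and Wj_lim: "filterlim Wj at_top sequentially"
    and ratio_lim: "(\<lambda>j. k (Wj j / (4 * \<delta>)) / \<epsilon> j) \<longlonglongrightarrow> 0"
  defines "A \<equiv> (\<Union>j. {(\<omega>, r). r > 0 \<and> \<bar>W (\<omega>, r) - Wj j\<bar> \<le> \<epsilon> j})"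
  shows "A \<in> sets (\<mu> \<Otimes>\<^sub>M lborel) \<and> emeasure (\<mu> \<Otimes>\<^sub>M lborel) A < \<infinity> \<and>
         (\<forall>x \<in> Uset f D. \<exists>K. (f ^^ K) x \<in> A)"
proof -
  have borel: "sets \<mu> = sets borel" and prob: "prob_space \<mu>"
    using haar unfolding haar_prob_def by auto
  interpret radial_bilipschitz W \<beta> \<delta>
    using W_C1 beta_pos W_r_bounds by (rule C1_psi_prod_radial_bilipschitz)
  have D_pos: "D \<subseteq> UNIV \<times> {0<..}"
    using emb unfolding mp_embedding_def by (elim conjE)
  have A_eq: "A = (\<Union>j. band (Wj j) (\<epsilon> j))"
    unfolding A_def band_def ..
  have "A \<in> sets (\<mu> \<Otimes>\<^sub>M lborel)"
    unfolding A_eq using band_measurable[OF borel] by (intro sets.countable_UN) blast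
  moreover have "emeasure (\<mu> \<Otimes>\<^sub>M lborel) A < \<infinity>"
    unfolding A_eq using borel prob eps_pos eps_summable by (rule bands_UN_emeasure_lt_top)
  moreover have "\<exists>K. (f ^^ K) x \<in> A" if x: "x \<in> Uset f D" for x
  proof -
    obtain j K where "(f ^^ K) x \<in> band (Wj j) (\<epsilon> j)"
      using Uset_hits_band[OF compact_Omega D_pos W_step x k_decr k_bdd eps_pos Wj_pos Wj_lim
          ratio_lim] by blast
    then show ?thesis unfolding A_eq by blast
  qed
  ultimately show ?thesis by (intro conjI ballI) simp_all
qed

end
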